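(* Let $\sigma(x,y)=(x\rightharpoonup y,x\leftharpoonup y)$ be an involutive non-degenerate quiver-theoretic Yang--Baxter map on a quiver $\mathscr{A}$ over $\Lambda$, let $x\star y:=(x\rightharpoonup\cdot)^{-1}(y)$ for $\mathfrak{s}(x)=\mathfrak{s}(y)$, and let $E$ be the closure of (the image of) $\mathscr{A}$ under right-lcms in the structure category $\mathscr{C}(\sigma)$. For $\lambda\in\Lambda$ and a finite set $I=\{x_1,\dots,x_n\}\subseteq\mathscr{A}(\lambda,\Lambda)$ of pairwise distinct arrows, define $\Omega_1(x_1)=x_1$, $\Omega_i(x_1,\dots,x_i)=\Omega_{i-1}(x_1,\dots,x_{i-1})\star\Omega_{i-1}(x_1,\dots,x_{i-2},x_i)$ for $2\le i\le n$, and $\Delta_I=[\Omega_1(x_1)|\Omega_2(x_1,x_2)|\dots|\Omega_n(x_1,\dots,x_n)]\in\mathscr{C}(\sigma)$ (this element is the right-lcm of $I$ and does not depend on the ordering of $I$). Then $E=\{\Delta_I\mid\lambda\in\Lambda,\ I\subseteq\mathscr{A}(\lambda,\Lambda),\ 1\le|I|<\infty\}\cup\mathbf{1}_{\mathscr{A}}$, where $\mathbf{1}_{\mathscr{A}}=\{\mathbf{1}_\lambda\mid\lambda\in\Lambda\}$ is the set of identities of $\mathscr{C}(\sigma)$.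
   Context: A quiver-theoretic Yang--Baxter map is a source/target-preserving map $\sigma$ on composable pairs satisfying the braid relation; involutive: $\sigma^2=\mathrm{id}$; non-degenerate: all $x\rightharpoonup\cdot\colon\mathscr{A}(\mathfrak{t}(x),\Lambda)\to\mathscr{A}(\mathfrak{s}(x),\Lambda)$ and $\cdot\leftharpoonup y\colon\mathscr{A}(\Lambda,\mathfrak{s}(y))\to\mathscr{A}(\Lambda,\mathfrak{t}(y))$ bijective. $\mathscr{C}(\sigma)$ is the category presented by generators $\mathscr{A}$ and relations $x|y\sim(x\rightharpoonup y)|(x\leftharpoonup y)$; $[w]$ denotes the class of a path $w$. A right-lcm of elements is a common right-multiple that left-divides every common right-multiple. *)

theory Defs
  imports Main
begin

text \<open>A quiver over the vertex set L has arrow set A with source/target maps src, tgt.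
  The map sigma on composable pairs is sigma(x,y) = (lact x y, ract x y).\<close>

definition qYB_map ::
  "'v set \<Rightarrow> 'a set \<Rightarrow> ('a \<Rightarrow> 'v) \<Rightarrow> ('a \<Rightarrow> 'v) \<Rightarrow> ('a \<Rightarrow> 'a \<Rightarrow> 'a) \<Rightarrow> ('a \<Rightarrow> 'a \<Rightarrow> 'a) \<Rightarrow> bool" where
  "qYB_map L A src tgt lact ract \<longleftrightarrow>
     (\<forall>x\<in>A. src x \<in> L \<and> tgt x \<in> L) \<and>
     (\<forall>x\<in>A. \<forall>y\<in>A. tgt x = src y \<longrightarrow>
        lact x y \<in> A \<and> ract x y \<in> A \<and> src (lact x y) = src x \<and>
        tgt (lact x y) = src (ract x y) \<and> tgt (ract x y) = tgt y) \<and>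
     (\<forall>x\<in>A. \<forall>y\<in>A. \<forall>z\<in>A. tgt x = src y \<longrightarrow> tgt y = src z \<longrightarrow>
        (let s1 = (\<lambda>(a,b,c). (lact a b, ract a b, c));
             s2 = (\<lambda>(a,b,c). (a, lact b c, ract b c))
         in s1 (s2 (s1 (x,y,z))) = s2 (s1 (s2 (x,y,z)))))"

definition qYB_involutive ::
  "'a set \<Rightarrow> ('a \<Rightarrow> 'v) \<Rightarrow> ('a \<Rightarrow> 'v) \<Rightarrow> ('a \<Rightarrow> 'a \<Rightarrow> 'a) \<Rightarrow> ('a \<Rightarrow> 'a \<Rightarrow> 'a) \<Rightarrow> bool" where
  "qYB_involutive A src tgt lact ract \<longleftrightarrow>
     (\<forall>x\<in>A. \<forall>y\<in>A. tgt x = src y \<longrightarrow>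
        lact (lact x y) (ract x y) = x \<and> ract (lact x y) (ract x y) = y)"

definition qYB_nondegenerate ::
  "'a set \<Rightarrow> ('a \<Rightarrow> 'v) \<Rightarrow> ('a \<Rightarrow> 'v) \<Rightarrow> ('a \<Rightarrow> 'a \<Rightarrow> 'a) \<Rightarrow> ('a \<Rightarrow> 'a \<Rightarrow> 'a) \<Rightarrow> bool" where
  "qYB_nondegenerate A src tgt lact ract \<longleftrightarrow>
     (\<forall>x\<in>A. bij_betw (lact x) {z\<in>A. src z = tgt x} {z\<in>A. src z = src x}) \<and>
     (\<forall>y\<in>A. bij_betw (\<lambda>z. ract z y) {z\<in>A. tgt z = src y} {z\<in>A. tgt z = tgt y})"

text \<open>Paths: a pair (l, w) of a source vertex l and a composable list w of arrows
  starting at l; (l, []) is the empty path (identity) at l.\<close>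

definition valid_path ::
  "'v set \<Rightarrow> 'a set \<Rightarrow> ('a \<Rightarrow> 'v) \<Rightarrow> ('a \<Rightarrow> 'v) \<Rightarrow> 'v \<times> 'a list \<Rightarrow> bool" where
  "valid_path L A src tgt p \<longleftrightarrow>
     fst p \<in> L \<and> set (snd p) \<subseteq> A \<and>
     (snd p \<noteq> [] \<longrightarrow> src (hd (snd p)) = fst p) \<and>
     (\<forall>i. Suc i < length (snd p) \<longrightarrow> tgt (snd p ! i) = src (snd p ! Suc i))"

definition path_tgt :: "('a \<Rightarrow> 'v) \<Rightarrow> 'v \<times> 'a list \<Rightarrow> 'v" where
  "path_tgt tgt p = (if snd p = [] then fst p else tgt (last (snd p)))"

inductive sc_step for L A src tgt lact ract where
  "valid_path L A src tgt (l, u @ [x, y] @ v) \<Longrightarrow>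
   sc_step L A src tgt lact ract (l, u @ [x, y] @ v) (l, u @ [lact x y, ract x y] @ v)"

definition sc_cong where
  "sc_cong L A src tgt lact ract = equivclp (sc_step L A src tgt lact ract)"

definition sc_class where
  "sc_class L A src tgt lact ract p = {q. sc_cong L A src tgt lact ract p q}"

definition sc_mor_from where
  "sc_mor_from L A src tgt lact ract l =
     {sc_class L A src tgt lact ract p | p. valid_path L A src tgt p \<and> fst p = l}"

definition sc_ldiv where
  "sc_ldiv L A src tgt lact ract a b \<longleftrightarrow>
     (\<exists>p q. valid_path L A src tgt p \<and> valid_path L A src tgt q \<and>
        path_tgt tgt p = fst q \<and>
        a = sc_class L A src tgt lact ract p \<and>
        b = sc_class L A src tgt lact ract (fst p, snd p @ snd q))"

definition sc_rlcm where
  "sc_rlcm L A src tgt lact ract l S m \<longleftrightarrow>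
     S \<subseteq> sc_mor_from L A src tgt lact ract l \<and>
     m \<in> sc_mor_from L A src tgt lact ract l \<and>
     (\<forall>a\<in>S. sc_ldiv L A src tgt lact ract a m) \<and>
     (\<forall>c\<in>sc_mor_from L A src tgt lact ract l.
        (\<forall>a\<in>S. sc_ldiv L A src tgt lact ract a c) \<longrightarrow> sc_ldiv L A src tgt lact ract m c)"

inductive_set lcm_closure for L A src tgt lact ract where
  gen: "x \<in> A \<Longrightarrow> sc_class L A src tgt lact ract (src x, [x]) \<in> lcm_closure L A src tgt lact ract"
| lcm: "finite S \<Longrightarrow> (\<forall>a\<in>S. a \<in> lcm_closure L A src tgt lact ract) \<Longrightarrow> l \<in> L \<Longrightarrow>
        sc_rlcm L A src tgt lact ract l S m \<Longrightarrow> m \<in> lcm_closure L A src tgt lact ract"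

definition qstar where
  "qstar A src tgt lact x y = (THE z. z \<in> A \<and> src z = tgt x \<and> lact x z = y)"

text \<open>Omega: with f 0, ..., f k standing for x_1, ..., x_(k+1),
  Omega st k f = Omega_(k+1)(x_1,...,x_(k+1)).\<close>

primrec Omega :: "('a \<Rightarrow> 'a \<Rightarrow> 'a) \<Rightarrow> nat \<Rightarrow> (nat \<Rightarrow> 'a) \<Rightarrow> 'a" where
  "Omega st 0 f = f 0"
| "Omega st (Suc k) f = st (Omega st k f) (Omega st k (f(k := f (Suc k))))"

definition Delta_set where
  "Delta_set L A src tgt lact ract =
     {sc_class L A src tgt lact ract
        (l, map (\<lambda>i. Omega (qstar A src tgt lact) i f) [0..<n]) | l n f.
      l \<in> L \<and> 1 \<le> n \<and> inj_on f {..<n} \<and> (\<forall>i<n. f i \<in> A \<and> src (f i) = l)}"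

definition sc_identities where
  "sc_identities L A src tgt lact ract = {sc_class L A src tgt lact ract (l, []) | l. l \<in> L}"

end

theory Submission
  imports Defs "HOL-Library.Multiset"
begin

(* Assign to a path x_1 ... x_n the multiset J of the arrows x_1, x_1 \<rightharpoonup> x_2,
  x_1 \<rightharpoonup> (x_2 \<rightharpoonup> x_3), ...  The braid relation and involutivity make J
  invariant under the defining relations of C(sigma).  Non-degeneracy lets one cancel a common
  first arrow, and moving any element of J to the front of a path by relations shows that,
  among morphisms with source lambda, [u] left-divides [w] iff J u is a submultiset of J w;
  in particular J is injective on such morphisms.  So right-lcms are computed by taking the
  union of the underlying sets, and E consists exactly of the identities and the classes whose
  J has no repeated arrow.  Finally J(Delta_I) = I, because x_1 \<rightharpoonup> (x_1 \<star> x_i) = x_i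
  turns the recursion defining Omega into the recursion defining J. *)

lemma valid_path_Cons:
  assumes "tgt x \<in> L"
  shows "valid_path L A src tgt (l, x # w) \<longleftrightarrow>
     l \<in> L \<and> x \<in> A \<and> src x = l \<and> valid_path L A src tgt (tgt x, w)"
proof -
  have "(\<forall>i. Suc i < length (x # w) \<longrightarrow> tgt ((x # w) ! i) = src ((x # w) ! Suc i)) \<longleftrightarrow>
     (w \<noteq> [] \<longrightarrow> tgt x = src (hd w)) \<and> (\<forall>i. Suc i < length w \<longrightarrow> tgt (w ! i) = src (w ! Suc i))"
    by (cases w) (auto simp: nth_Cons split: nat.split)
  then show ?thesis
    using assms unfolding valid_path_def by auto
qed

lemma path_tgt_Nil [simp]: "path_tgt tgt (l, []) = l"
  by (simp add: path_tgt_def)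

lemma path_tgt_Cons: "path_tgt tgt (l, x # w) = path_tgt tgt (tgt x, w)"
  by (simp add: path_tgt_def)

fun path_act :: "('a \<Rightarrow> 'a \<Rightarrow> 'a) \<Rightarrow> 'a list \<Rightarrow> 'a multiset \<Rightarrow> 'a multiset" where
  "path_act lact [] M = M"
| "path_act lact (x # u) M = image_mset (lact x) (path_act lact u M)"

fun path_mset :: "('a \<Rightarrow> 'a \<Rightarrow> 'a) \<Rightarrow> 'a list \<Rightarrow> 'a multiset" where
  "path_mset lact [] = {#}"
| "path_mset lact (x # w) = add_mset x (image_mset (lact x) (path_mset lact w))"

lemma path_mset_append:
  "path_mset lact (u @ w) = path_mset lact u + path_act lact u (path_mset lact w)"
  by (induction u) auto

lemma size_path_mset: "size (path_mset lact w) = length w"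
  by (induction w) auto

lemma Omega_Suc_shift: "Omega st (Suc k) f = Omega st k (\<lambda>j. st (f 0) (f (Suc j)))"
proof (induction k arbitrary: f)
  case 0
  then show ?case by simp
next
  case (Suc k)
  let ?g = "\<lambda>j. st (f 0) (f (Suc j))"
  have shift_upd: "(\<lambda>j. st ((f(Suc k := f (Suc (Suc k)))) 0) ((f(Suc k := f (Suc (Suc k)))) (Suc j)))
      = ?g(k := ?g (Suc k))"
    by (auto simp: fun_eq_iff)
  have "Omega st (Suc (Suc k)) f
      = st (Omega st (Suc k) f) (Omega st (Suc k) (f(Suc k := f (Suc (Suc k)))))"
    by (rule Omega.simps(2))
  also have "\<dots> = st (Omega st k ?g) (Omega st k (?g(k := ?g (Suc k))))"
    by (simp only: Suc.IH shift_upd)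
  also have "\<dots> = Omega st (Suc k) ?g"
    by (simp only: Omega.simps(2))
  finally show ?case .
qed

lemma map_Omega_upt_Suc:
  "map (\<lambda>i. Omega st i f) [0..<Suc n] =
     f 0 # map (\<lambda>i. Omega st i (\<lambda>j. st (f 0) (f (Suc j)))) [0..<n]"
  by (simp del: Omega.simps(2) upt_Suc add: upt_conv_Cons map_Suc_upt[symmetric] Omega_Suc_shift)

lemma image_mset_subseteq_reflect:
  assumes "image_mset f M \<subseteq># image_mset f N" "inj_on f D" "set_mset M \<subseteq> D" "set_mset N \<subseteq> D"
  shows "M \<subseteq># N"
proof -
  have inv: "image_mset (inv_into D f) (image_mset f K) = K" if "set_mset K \<subseteq> D" for K
    using assms(2) that by (simp add: multiset.map_comp image_mset_cong[where g = id] subsetD)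
  show ?thesis
    using image_mset_subseteq_mono[OF assms(1), of "inv_into D f"] inv assms(3,4) by simp
qed

lemma subseteq_mset_set_imp_mset_set:
  assumes "M \<subseteq># mset_set U"
  shows "M = mset_set (set_mset M)"
proof (rule multiset_eqI)
  fix x
  have "count M x \<le> count (mset_set U) x"
    using assms by (rule mset_subset_eq_count)
  also have "\<dots> \<le> 1"
    by (simp add: count_mset_set')
  finally have le1: "count M x \<le> 1" .
  show "count M x = count (mset_set (set_mset M)) x"
  proof (cases "x \<in># M")
    case True
    then have "0 < count M x" by simp
    with le1 have "count M x = 1" by linarith
    then show ?thesis using True by (simp add: count_mset_set')
  qed (simp add: not_in_iff)
qed

lemma mult_free_subseteq_mset:
  assumes "M = mset_set (set_mset M)" "set_mset M \<subseteq> set_mset N"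
  shows "M \<subseteq># N"
proof -
  have "mset_set (set_mset M) \<subseteq># mset_set (set_mset N)"
    using assms(2) by (simp add: subset_imp_msubset_mset_set)
  also have "\<dots> \<subseteq># N"
    by (rule mset_set_set_mset_msubset)
  finally show ?thesis
    using assms(1) by simp
qed

locale invol_nondeg_qYB =
  fixes L :: "'v set" and A :: "'a set" and src tgt :: "'a \<Rightarrow> 'v"
    and lact ract :: "'a \<Rightarrow> 'a \<Rightarrow> 'a"
  assumes qYB_map: "qYB_map L A src tgt lact ract"
    and involutive: "qYB_involutive A src tgt lact ract"
    and nondegenerate: "qYB_nondegenerate A src tgt lact ract"
begin

abbreviation "is_path \<equiv> valid_path L A src tgt"
abbreviation "step \<equiv> sc_step L A src tgt lact ract"
abbreviation "congr \<equiv> sc_cong L A src tgt lact ract"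
abbreviation "cls \<equiv> sc_class L A src tgt lact ract"
abbreviation "J \<equiv> path_mset lact"
abbreviation "ldiv \<equiv> sc_ldiv L A src tgt lact ract"
abbreviation "mor_from \<equiv> sc_mor_from L A src tgt lact ract"
abbreviation "rlcm \<equiv> sc_rlcm L A src tgt lact ract"
abbreviation "star \<equiv> qstar A src tgt lact"
abbreviation "Delta_path f n \<equiv> map (\<lambda>i. Omega star i f) [0..<n]"

lemma src_tgt_in_L: "x \<in> A \<Longrightarrow> src x \<in> L \<and> tgt x \<in> L"
  using qYB_map unfolding qYB_map_def by blast

lemma lact_ract_arrows:
  "x \<in> A \<Longrightarrow> y \<in> A \<Longrightarrow> tgt x = src y \<Longrightarrow>
     lact x y \<in> A \<and> ract x y \<in> A \<and> src (lact x y) = src x \<and>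
     tgt (lact x y) = src (ract x y) \<and> tgt (ract x y) = tgt y"
  using qYB_map unfolding qYB_map_def by blast

lemma lact_braid:
  assumes "x \<in> A" "y \<in> A" "z \<in> A" "tgt x = src y" "tgt y = src z"
  shows "lact (lact x y) (lact (ract x y) z) = lact x (lact y z)"
proof -
  have "let s1 = (\<lambda>(a,b,c). (lact a b, ract a b, c));
            s2 = (\<lambda>(a,b,c). (a, lact b c, ract b c))
        in s1 (s2 (s1 (x,y,z))) = s2 (s1 (s2 (x,y,z)))"
    using qYB_map assms unfolding qYB_map_def by blast
  then show ?thesis by (simp add: Let_def)
qed

lemma lact_involutive: "x \<in> A \<Longrightarrow> y \<in> A \<Longrightarrow> tgt x = src y \<Longrightarrow> lact (lact x y) (ract x y) = x"
  using involutive unfolding qYB_involutive_def by blast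

lemma lact_bij: "x \<in> A \<Longrightarrow> bij_betw (lact x) {z\<in>A. src z = tgt x} {z\<in>A. src z = src x}"
  using nondegenerate unfolding qYB_nondegenerate_def by blast

lemma is_path_Nil [simp]: "is_path (l, []) \<longleftrightarrow> l \<in> L"
  by (simp add: valid_path_def)

lemma is_path_Cons [simp]:
  "is_path (l, x # w) \<longleftrightarrow> l \<in> L \<and> x \<in> A \<and> src x = l \<and> is_path (tgt x, w)"
proof (cases "x \<in> A")
  case True
  then show ?thesis using valid_path_Cons[of tgt x L] src_tgt_in_L by simp
qed (simp add: valid_path_def)

lemma is_path_start: "is_path (l, w) \<Longrightarrow> l \<in> L"
  by (cases w) auto

lemma is_path_append:
  "is_path (l, u @ w) \<longleftrightarrow> is_path (l, u) \<and> is_path (path_tgt tgt (l, u), w)"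
  by (induction u arbitrary: l) (auto simp: path_tgt_Cons is_path_start)

lemma set_J_subset: "is_path (l, w) \<Longrightarrow> set_mset (J w) \<subseteq> {z\<in>A. src z = l}"
proof (induction w arbitrary: l)
  case (Cons x w)
  then show ?case
    using lact_ract_arrows[of x] by fastforce
qed simp

lemma J_swap:
  assumes "x \<in> A" "y \<in> A" "tgt x = src y" "is_path (tgt y, v)"
  shows "J (x # y # v) = J (lact x y # ract x y # v)"
proof -
  have "image_mset (lact x \<circ> lact y) (J v) = image_mset (lact (lact x y) \<circ> lact (ract x y)) (J v)"
    by (rule image_mset_cong) (use set_J_subset[OF assms(4)] lact_braid[OF assms(1,2)] assms(3) in auto)
  then show ?thesis
    using lact_involutive[OF assms(1-3)] by (simp add: multiset.map_comp add_mset_commute)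
qed

lemma step_invariants:
  assumes "step p q"
  shows "is_path p \<and> is_path q \<and> fst q = fst p \<and> J (snd q) = J (snd p)"
  using assms
proof cases
  case (1 l u x y v)
  then have path: "is_path (l, u)" "is_path (path_tgt tgt (l, u), x # y # v)"
    by (simp_all add: is_path_append)
  then have x: "x \<in> A" and y: "y \<in> A" "tgt x = src y" and v: "is_path (tgt y, v)"
    by auto
  have "is_path (path_tgt tgt (l, u), lact x y # ract x y # v)"
    using path(2) lact_ract_arrows[OF x y] src_tgt_in_L v by auto
  then have "is_path q"
    using 1 path(1) by (simp add: is_path_append)
  moreover have "J (snd q) = J (snd p)"
    using 1 J_swap[OF x y v] by (simp del: path_mset.simps add: path_mset_append)
  ultimately show ?thesis
    using 1 by simp
qed

lemma congr_refl [simp]: "congr p p"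
  by (simp add: sc_cong_def)

lemma congr_sym: "congr p q \<Longrightarrow> congr q p"
  unfolding sc_cong_def by (rule equivclp_sym)

lemma congr_trans: "congr p q \<Longrightarrow> congr q r \<Longrightarrow> congr p r"
  unfolding sc_cong_def by (rule equivclp_trans)

lemma step_imp_congr: "step p q \<Longrightarrow> congr p q"
  unfolding sc_cong_def by (rule r_into_equivclp)

lemma cls_eq_iff: "cls p = cls q \<longleftrightarrow> congr p q"
proof
  assume "cls p = cls q"
  then show "congr p q"
    by (metis congr_refl mem_Collect_eq sc_class_def)
next
  assume "congr p q"
  then show "cls p = cls q"
    unfolding sc_class_def using congr_sym congr_trans by blast
qed

lemma congr_invariants:
  assumes "congr p q" "is_path p"
  shows "is_path q \<and> fst q = fst p \<and> J (snd q) = J (snd p)"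
  using assms(1) unfolding sc_cong_def
proof (induction rule: equivclp_induct)
  case (step y z)
  then show ?case
    using step_invariants by metis
qed (use assms(2) in simp)

lemma step_prepend:
  assumes "step p q" "is_path (l, u)" "path_tgt tgt (l, u) = fst p"
  shows "step (l, u @ snd p) (l, u @ snd q)"
  using assms(1)
proof cases
  case (1 l' u' x y v)
  then have "is_path (l, (u @ u') @ [x, y] @ v)"
    using assms(2,3) by (simp add: is_path_append)
  then show ?thesis
    using sc_step.intros 1 by fastforce
qed

lemma congr_prepend:
  assumes "congr p q" "is_path (l, u)" "path_tgt tgt (l, u) = fst p"
  shows "congr (l, u @ snd p) (l, u @ snd q)"
proof -
  have "fst q = fst p \<and> congr (l, u @ snd p) (l, u @ snd q)"
    using assms(1) unfolding sc_cong_def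
  proof (induction rule: equivclp_induct)
    case (step y z)
    then have "fst z = fst p"
      using step_invariants by metis
    moreover have "equivclp step (l, u @ snd y) (l, u @ snd z)"
      using step step_prepend[OF _ assms(2)] assms(3) calculation
      by (metis converse_r_into_equivclp r_into_equivclp)
    ultimately show ?case
      using step.IH equivclp_trans by metis
  qed simp
  then show ?thesis
    by (simp add: sc_cong_def)
qed

lemma congr_Cons:
  assumes "congr (tgt x, w) (tgt x, w')" "x \<in> A" "src x = l" "l \<in> L"
  shows "congr (l, x # w) (l, x # w')"
  using congr_prepend[OF assms(1), of l "[x]"] assms src_tgt_in_L by (simp add: path_tgt_Cons)

lemma congr_move_to_front:
  assumes "is_path (l, w)" "z \<in># J w"
  shows "\<exists>w'. is_path (l, z # w') \<and> congr (l, w) (l, z # w')"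
  using assms
proof (induction w arbitrary: l z)
  case (Cons y w)
  then have y: "l \<in> L" "y \<in> A" "src y = l" and w: "is_path (tgt y, w)"
    by auto
  show ?case
  proof (cases "z = y")
    case False
    then obtain z' where z': "z' \<in># J w" "z = lact y z'"
      using Cons.prems(2) by auto
    obtain w' where w': "is_path (tgt y, z' # w')" "congr (tgt y, w) (tgt y, z' # w')"
      using Cons.IH[OF w z'(1)] by blast
    have path: "is_path (l, y # z' # w')"
      using y w' by simp
    then have "step (l, [] @ [y, z'] @ w') (l, [] @ [z, ract y z'] @ w')"
      using sc_step.intros[of L A src tgt l "[]" y z' w'] z'(2) by simp
    then have swap: "congr (l, y # z' # w') (l, z # ract y z' # w')"
      by (simp add: step_imp_congr)
    have "congr (l, y # w) (l, z # ract y z' # w')"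
      using congr_trans[OF congr_Cons[OF w'(2) y(2,3,1)] swap] .
    moreover have "is_path (l, z # ract y z' # w')"
      using congr_invariants[OF swap path] by simp
    ultimately show ?thesis
      by blast
  next
    case True
    then show ?thesis
      using Cons.prems(1) by (intro exI[of _ w]) simp
  qed
qed simp

lemma J_subseteq_imp_congr_append:
  assumes "is_path (l, u)" "is_path (l, w)" "J u \<subseteq># J w"
  shows "\<exists>v. is_path (path_tgt tgt (l, u), v) \<and> congr (l, w) (l, u @ v)"
  using assms
proof (induction u arbitrary: l w)
  case (Cons x u)
  then have x: "l \<in> L" "x \<in> A" "src x = l" and u: "is_path (tgt x, u)"
    by auto
  have "x \<in># J w"
    using mset_subset_eqD[OF Cons.prems(3)] by simp
  then obtain w' where w': "is_path (l, x # w')" "congr (l, w) (l, x # w')"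
    using congr_move_to_front[OF Cons.prems(2)] by blast
  have "J w = J (x # w')"
    using congr_invariants[OF w'(2)] Cons.prems(2) by simp
  then have image: "image_mset (lact x) (J u) \<subseteq># image_mset (lact x) (J w')"
    using Cons.prems(3) by simp
  have inj: "inj_on (lact x) {z\<in>A. src z = tgt x}"
    using lact_bij[OF x(2)] by (simp add: bij_betw_def)
  have w'_path: "is_path (tgt x, w')"
    using w'(1) by simp
  have "J u \<subseteq># J w'"
    using image_mset_subseteq_reflect[OF image inj set_J_subset[OF u] set_J_subset[OF w'_path]] .
  then obtain v where v: "is_path (path_tgt tgt (tgt x, u), v)" "congr (tgt x, w') (tgt x, u @ v)"
    using Cons.IH[OF u w'_path] by blast
  have "congr (l, w) (l, (x # u) @ v)"
    using congr_trans[OF w'(2) congr_Cons[OF v(2) x(2,3,1)]] by simp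
  then show ?case
    using v(1) by (auto simp: path_tgt_Cons)
qed auto

lemma congr_if_J_eq:
  assumes "is_path (l, u)" "is_path (l, w)" "J u = J w"
  shows "congr (l, w) (l, u)"
proof -
  obtain v where v: "congr (l, w) (l, u @ v)"
    using J_subseteq_imp_congr_append[OF assms(1,2)] assms(3) by auto
  have "J (u @ v) = J u"
    using congr_invariants[OF v assms(2)] assms(3) by simp
  then have "length (u @ v) = length u"
    by (metis size_path_mset)
  then show ?thesis
    using v by simp
qed

lemma star_props:
  assumes "x \<in> A" "y \<in> A" "src y = src x"
  shows "star x y \<in> A \<and> src (star x y) = tgt x \<and> lact x (star x y) = y"
proof -
  have "y \<in> lact x ` {z\<in>A. src z = tgt x}"
    using lact_bij[OF assms(1)] assms(2,3) by (simp add: bij_betw_def)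
  then obtain z where z: "z \<in> A" "src z = tgt x" "lact x z = y"
    by auto
  have "\<exists>!z. z \<in> A \<and> src z = tgt x \<and> lact x z = y"
    using z lact_bij[OF assms(1)] by (auto simp: bij_betw_def dest: inj_onD)
  then show ?thesis
    unfolding qstar_def by (rule theI')
qed

lemma J_Delta_path:
  assumes "l \<in> L" "inj_on f {..<n}" "\<forall>i<n. f i \<in> A \<and> src (f i) = l"
  shows "is_path (l, Delta_path f n) \<and> J (Delta_path f n) = mset_set (f ` {..<n})"
  using assms
proof (induction n arbitrary: f l)
  case (Suc n)
  define x where "x = f 0"
  define g where "g j = star x (f (Suc j))" for j
  have x: "x \<in> A" "src x = l"
    using Suc.prems(3) x_def by auto
  have g: "g j \<in> A \<and> src (g j) = tgt x \<and> lact x (g j) = f (Suc j)" if "j < n" for j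
    unfolding g_def using star_props[OF x(1), of "f (Suc j)"] Suc.prems(3) that x by auto
  have "inj_on g {..<n}"
  proof (rule inj_onI)
    fix i j
    assume ij: "i \<in> {..<n}" "j \<in> {..<n}" "g i = g j"
    then have "f (Suc i) = f (Suc j)"
      using g by (metis lessThan_iff)
    then show "i = j"
      using Suc.prems(2) ij(1,2) by (auto dest: inj_onD)
  qed
  then have IH: "is_path (tgt x, Delta_path g n) \<and> J (Delta_path g n) = mset_set (g ` {..<n})"
    using Suc.IH src_tgt_in_L[OF x(1)] g by blast
  have "inj_on (lact x) (g ` {..<n})"
    using lact_bij[OF x(1)] g by (auto simp: bij_betw_def intro: inj_on_subset)
  then have "image_mset (lact x) (mset_set (g ` {..<n})) = mset_set ((\<lambda>j. f (Suc j)) ` {..<n})"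
    using g by (simp add: image_mset_mset_set image_image)
  moreover have "x \<notin> (\<lambda>j. f (Suc j)) ` {..<n}"
    using Suc.prems(2) unfolding x_def inj_on_def by auto
  moreover have "f ` {..<Suc n} = insert x ((\<lambda>j. f (Suc j)) ` {..<n})"
    unfolding lessThan_Suc_eq_insert_0 x_def by (auto simp: image_image)
  moreover have "Delta_path f (Suc n) = x # Delta_path g n"
    unfolding map_Omega_upt_Suc x_def g_def ..
  ultimately show ?case
    using IH x Suc.prems(1) by simp
qed simp

lemma Delta_path_exists:
  assumes "l \<in> L" "finite I" "I \<subseteq> {z\<in>A. src z = l}"
  obtains f where "inj_on f {..<card I}" "\<forall>i<card I. f i \<in> A \<and> src (f i) = l"
    "is_path (l, Delta_path f (card I))" "J (Delta_path f (card I)) = mset_set I"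
proof -
  obtain f where "bij_betw f {..<card I} I"
    using ex_bij_betw_nat_finite[OF assms(2)] atLeast0LessThan by auto
  then have f: "inj_on f {..<card I}" "f ` {..<card I} = I"
    by (auto simp: bij_betw_def)
  then have "\<forall>i<card I. f i \<in> A \<and> src (f i) = l"
    using assms(3) by auto
  then show ?thesis
    using that f J_Delta_path[OF assms(1) f(1)] by auto
qed

lemma mor_from_iff: "c \<in> mor_from l \<longleftrightarrow> (\<exists>w. is_path (l, w) \<and> c = cls (l, w))"
  unfolding sc_mor_from_def by force

lemma ldiv_iff_J_subseteq:
  assumes "is_path (l, u)" "is_path (l, w)"
  shows "ldiv (cls (l, u)) (cls (l, w)) \<longleftrightarrow> J u \<subseteq># J w"
proof
  assume "ldiv (cls (l, u)) (cls (l, w))"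
  then obtain p q where "is_path p" "congr (l, u) p" "congr (l, w) (fst p, snd p @ snd q)"
    unfolding sc_ldiv_def cls_eq_iff by auto
  then have "J (snd p) = J u" "J w = J (snd p @ snd q)"
    using congr_invariants assms by fastforce+
  then show "J u \<subseteq># J w"
    by (simp add: path_mset_append)
next
  assume "J u \<subseteq># J w"
  then obtain v where "is_path (path_tgt tgt (l, u), v)" "congr (l, w) (l, u @ v)"
    using J_subseteq_imp_congr_append assms by blast
  then show "ldiv (cls (l, u)) (cls (l, w))"
    unfolding sc_ldiv_def cls_eq_iff using assms(1) by fastforce
qed

definition mult_free_classes :: "('v \<times> 'a list) set set" where
  "mult_free_classes = {cls (l, w) | l w. is_path (l, w) \<and> J w = mset_set (set_mset (J w))}"

lemma cls_in_mult_free_classes_iff: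
  assumes "is_path (l, w)"
  shows "cls (l, w) \<in> mult_free_classes \<longleftrightarrow> J w = mset_set (set_mset (J w))"
proof
  assume "cls (l, w) \<in> mult_free_classes"
  then obtain l' w' where w': "cls (l', w') = cls (l, w)" "is_path (l', w')"
    "J w' = mset_set (set_mset (J w'))"
    unfolding mult_free_classes_def by auto
  then have "congr (l', w') (l, w)"
    using cls_eq_iff by blast
  then show "J w = mset_set (set_mset (J w))"
    using congr_invariants w'(2,3) by fastforce
qed (use assms in \<open>auto simp: mult_free_classes_def\<close>)

lemma mult_free_class_from:
  assumes "a \<in> mult_free_classes" "a \<in> mor_from l"
  obtains w where "is_path (l, w)" "a = cls (l, w)" "J w = mset_set (set_mset (J w))"
proof -
  obtain w where "is_path (l, w)" "a = cls (l, w)"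
    using assms(2) mor_from_iff by blast
  then show ?thesis
    using that assms(1) cls_in_mult_free_classes_iff by blast
qed

lemma Delta_set_subset_mult_free_classes: "Delta_set L A src tgt lact ract \<subseteq> mult_free_classes"
proof
  fix m
  assume "m \<in> Delta_set L A src tgt lact ract"
  then obtain l n f where "m = cls (l, Delta_path f n)" "l \<in> L" "inj_on f {..<n}"
      "\<forall>i<n. f i \<in> A \<and> src (f i) = l"
    unfolding Delta_set_def by blast
  then show "m \<in> mult_free_classes"
    using J_Delta_path cls_in_mult_free_classes_iff by simp
qed

lemma sc_identities_subset_mult_free_classes:
  "sc_identities L A src tgt lact ract \<subseteq> mult_free_classes"
  unfolding sc_identities_def mult_free_classes_def
  by (force intro: exI[of _ "[]"])

lemma mult_free_class_in_Delta_set: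
  assumes "is_path (l, w)" "w \<noteq> []" "J w = mset_set (set_mset (J w))"
  shows "cls (l, w) \<in> Delta_set L A src tgt lact ract"
proof -
  let ?I = "set_mset (J w)"
  have l: "l \<in> L"
    using is_path_start[OF assms(1)] .
  obtain f where f: "inj_on f {..<card ?I}" "\<forall>i<card ?I. f i \<in> A \<and> src (f i) = l"
    "is_path (l, Delta_path f (card ?I))" "J (Delta_path f (card ?I)) = mset_set ?I"
    using Delta_path_exists[OF l _ set_J_subset[OF assms(1)]] by blast
  have "J w \<noteq> {#}"
    using assms(2) size_path_mset[of lact w] by (metis length_0_conv size_empty)
  then have "1 \<le> card ?I"
    by (simp add: Suc_le_eq card_gt_0_iff)
  moreover have "cls (l, w) = cls (l, Delta_path f (card ?I))"
    using congr_if_J_eq[OF f(3) assms(1)] f(4) assms(3) cls_eq_iff by simp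
  ultimately show ?thesis
    unfolding Delta_set_def using l f(1,2) by blast
qed

lemma Delta_set_Un_identities_eq:
  "Delta_set L A src tgt lact ract \<union> sc_identities L A src tgt lact ract = mult_free_classes"
proof (intro equalityI subsetI)
  fix m
  assume "m \<in> mult_free_classes"
  then obtain l w where "m = cls (l, w)" "is_path (l, w)" "J w = mset_set (set_mset (J w))"
    unfolding mult_free_classes_def by blast
  then show "m \<in> Delta_set L A src tgt lact ract \<union> sc_identities L A src tgt lact ract"
    using mult_free_class_in_Delta_set is_path_start unfolding sc_identities_def
    by (cases "w = []") auto
qed (use Delta_set_subset_mult_free_classes sc_identities_subset_mult_free_classes in blast)

lemma rlcm_in_mult_free_classes:
  assumes "finite S" "S \<subseteq> mult_free_classes" "rlcm l S m"
  shows "m \<in> mult_free_classes"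
proof -
  have S: "S \<subseteq> mor_from l" and m: "m \<in> mor_from l"
    and least: "\<And>c. c \<in> mor_from l \<Longrightarrow> \<forall>a\<in>S. ldiv a c \<Longrightarrow> ldiv m c"
    using assms(3) unfolding sc_rlcm_def by auto
  have "\<forall>a\<in>S. \<exists>w. is_path (l, w) \<and> a = cls (l, w) \<and> J w = mset_set (set_mset (J w))"
    using S assms(2) mult_free_class_from by (metis subsetD)
  then obtain W where W: "\<And>a. a \<in> S \<Longrightarrow>
      is_path (l, W a) \<and> a = cls (l, W a) \<and> J (W a) = mset_set (set_mset (J (W a)))"
    by (metis bchoice)
  obtain wm where wm: "is_path (l, wm)" "m = cls (l, wm)"
    using m mor_from_iff by blast
  define U where "U = (\<Union>a\<in>S. set_mset (J (W a)))"
  have "set_mset (J (W a)) \<subseteq> {z\<in>A. src z = l}" if "a \<in> S" for a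
    using set_J_subset W[OF that] by blast
  then have U: "finite U" "U \<subseteq> {z\<in>A. src z = l}"
    unfolding U_def using assms(1) by auto
  obtain f where "is_path (l, Delta_path f (card U))" "J (Delta_path f (card U)) = mset_set U"
    using Delta_path_exists[OF is_path_start[OF wm(1)] U] by blast
  then obtain d where d: "is_path (l, d)" "J d = mset_set U"
    by blast
  have "ldiv a (cls (l, d))" if "a \<in> S" for a
  proof -
    have "J (W a) \<subseteq># J d"
      using W[OF that] d(2) U(1) that
      by (intro mult_free_subseteq_mset) (auto simp: U_def)
    then show ?thesis
      using ldiv_iff_J_subseteq[of l "W a" d] W[OF that] d(1) by simp
  qed
  then have "ldiv m (cls (l, d))"
    using least d(1) mor_from_iff by blast
  then have "J wm \<subseteq># mset_set U"
    using ldiv_iff_J_subseteq[OF wm(1) d(1)] wm(2) d(2) by simp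
  then have "J wm = mset_set (set_mset (J wm))"
    by (rule subseteq_mset_set_imp_mset_set)
  then show ?thesis
    using cls_in_mult_free_classes_iff[OF wm(1)] wm(2) by simp
qed

lemma rlcm_of_arrows:
  assumes "is_path (l, w)" "J w = mset_set (set_mset (J w))"
  shows "rlcm l ((\<lambda>x. cls (l, [x])) ` set_mset (J w)) (cls (l, w))"
proof -
  have arrow: "is_path (l, [x])" if "x \<in># J w" for x
    using set_J_subset[OF assms(1)] that src_tgt_in_L is_path_start[OF assms(1)] by auto
  have ldiv_iff: "ldiv (cls (l, [x])) (cls (l, w')) \<longleftrightarrow> x \<in># J w'"
    if "x \<in># J w" "is_path (l, w')" for x w'
    using ldiv_iff_J_subseteq[OF arrow that(2)] that(1) by simp
  show ?thesis
    unfolding sc_rlcm_def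
  proof (intro conjI ballI impI)
    show "(\<lambda>x. cls (l, [x])) ` set_mset (J w) \<subseteq> mor_from l"
      using arrow mor_from_iff by blast
    show "cls (l, w) \<in> mor_from l"
      using assms(1) by (auto simp: mor_from_iff)
  next
    fix a
    assume "a \<in> (\<lambda>x. cls (l, [x])) ` set_mset (J w)"
    then show "ldiv a (cls (l, w))"
      using ldiv_iff assms(1) by auto
  next
    fix c
    assume "c \<in> mor_from l" and divides: "\<forall>a\<in>(\<lambda>x. cls (l, [x])) ` set_mset (J w). ldiv a c"
    then obtain w' where w': "is_path (l, w')" "c = cls (l, w')"
      unfolding mor_from_iff by blast
    then have "J w \<subseteq># J w'"
      using divides ldiv_iff assms(2) by (intro mult_free_subseteq_mset) auto
    then show "ldiv (cls (l, w)) c"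
      using ldiv_iff_J_subseteq[OF assms(1) w'(1)] w'(2) by simp
  qed
qed

lemma lcm_closure_subset_mult_free_classes: "lcm_closure L A src tgt lact ract \<subseteq> mult_free_classes"
proof
  fix m
  assume "m \<in> lcm_closure L A src tgt lact ract"
  then show "m \<in> mult_free_classes"
  proof (induction rule: lcm_closure.induct)
    case (gen x)
    then show ?case
      using cls_in_mult_free_classes_iff[of "src x" "[x]"] src_tgt_in_L by simp
  next
    case (lcm S l m)
    then show ?case
      using rlcm_in_mult_free_classes by blast
  qed
qed

lemma mult_free_classes_subset_lcm_closure: "mult_free_classes \<subseteq> lcm_closure L A src tgt lact ract"
proof
  fix m
  assume "m \<in> mult_free_classes"
  then obtain l w where m: "m = cls (l, w)" "is_path (l, w)" "J w = mset_set (set_mset (J w))"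
    unfolding mult_free_classes_def by blast
  have "cls (l, [x]) \<in> lcm_closure L A src tgt lact ract" if "x \<in># J w" for x
  proof -
    have "x \<in> A" "src x = l"
      using set_J_subset[OF m(2)] that by auto
    then show ?thesis
      by (metis lcm_closure.gen)
  qed
  then show "m \<in> lcm_closure L A src tgt lact ract"
    using lcm_closure.lcm[OF _ _ is_path_start[OF m(2)] rlcm_of_arrows[OF m(2,3)]] m(1) by blast
qed

end

theorem proposition5p10:
  fixes L :: "'v set" and A :: "'a set" and src tgt :: "'a \<Rightarrow> 'v"
    and lact ract :: "'a \<Rightarrow> 'a \<Rightarrow> 'a"
  assumes "qYB_map L A src tgt lact ract"
    and "qYB_involutive A src tgt lact ract"
    and "qYB_nondegenerate A src tgt lact ract"
  shows "lcm_closure L A src tgt lact ract =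
           Delta_set L A src tgt lact ract \<union> sc_identities L A src tgt lact ract"
proof -
  interpret invol_nondeg_qYB L A src tgt lact ract
    using assms by unfold_locales
  show ?thesis
    using lcm_closure_subset_mult_free_classes mult_free_classes_subset_lcm_closure
      Delta_set_Un_identities_eq by blast
qed

end
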